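(* In any execution of the algorithm described in the context, for every round $r$ there is at most one binary value $b\in\{0,1\}$ for which there exist signed $\mathrm{AUX}[r](b)$ messages from at least $n-t$ different processes.
   Context: Model. There are $n$ processes $p_1,\dots,p_n$ ($i$ is the index of $p_i$) communicating over an asynchronous, reliable, point-to-point network: every pair of processes is connected by a channel, message delays are finite but unbounded, and the network does not lose, duplicate, modify or create messages. "Broadcast" means sending the message to every process (including oneself). Messages are signed with unforgeable digital signatures ($\langle m\rangle_j$ denotes message $m$ signed by $p_j$); malformed messages or messages with invalid signatures are ignored. Up to $t$ processes are Byzantine (faulty) and may behave arbitrarily and collude, but cannot forge signatures of other processes; the remaining processes are non-faulty and follow the algorithm. It is assumed that $t<n/3$. Algorithm. Messages are of the form $\mathrm{AUX}[r](v)$ with round $r\in\mathbb{N}$ and $v\in\{0,1\}$, sent as a pair $(\langle \mathrm{AUX}[r](v)\rangle_j,\mathit{proofs})$ where $\mathit{proofs}$ is a set of signed AUX messages. The predicate $\mathsf{is\_valid}(r,est,\mathit{proofs})$ is: if $r=0$ return true; if $r=1$ return true iff $\mathit{proofs}$ contains signed $\mathrm{AUX}[0](est)$ messages from $t+1$ different processes; otherwise let $b=(r-1)\bmod 2$; if $est=b$, return true iff ($r=2$ and $\mathit{proofs}$ contains signed $\mathrm{AUX}[0](b)$ from $t+1$ different processes) or ($\mathit{proofs}$ contains signed $\mathrm{AUX}[r-2](b)$ from $n-t$ different processes); if $est\neq b$, return true iff $\mathit{proofs}$ contains signed $\mathrm{AUX}[r-1](\neg b)$ from $n-t$ different processes.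 Each process $p_i$ with proposal $v_i$ keeps a round counter $r_i$, a set $\mathit{aux\_values}_i$ of signed AUX messages, and timers indexed by naturals (timers $2r$ and $2r+1$ belong to round $r$; starting an already started or expired timer does nothing). It sets $r_i:=0$, $\mathit{aux\_values}_i:=\emptyset$, broadcasts $(\langle\mathrm{AUX}[0](v_i)\rangle_i,\emptyset)$, then repeats forever: (1) $r_i:=r_i+1$; (2) if $i=r_i\bmod n$ (coordinator), run Broadcast; (3) start timer $2r_i$ and wait until it expires; (4) if $i\ne r_i\bmod n$, run Broadcast; (5) wait until $\mathit{aux\_values}_i$ contains round-$r_i$ AUX messages from $n-t$ different processes; (6) start timer $2r_i+1$ and wait until it expires; (7) with $b_i=r_i\bmod 2$, if $\mathit{aux\_values}_i$ contains $\mathrm{AUX}[r_i](b_i)$ from $n-t$ different processes, decide $b_i$ (if not yet decided). Broadcast: let $\mathit{values}_i$ be the set of $v\in\{0,1\}$ such that $\mathsf{is\_valid}(r_i,v,S)$ holds for some $S\subseteq\mathit{aux\_values}_i$; let $bv=(r_i+1)\bmod 2$; if $p_i$ received from $p_{r_i\bmod n}$ a message $(\langle\mathrm{AUX}[r_i](p)\rangle_{r_i\bmod n},\cdot)$ with $p\in\mathit{values}_i$ then $est_i:=p$, else if $bv\in\mathit{values}_i$ then $est_i:=bv$, else $est_i:=\neg bv$; choose $\mathit{proofs}\subseteq\mathit{aux\_values}_i$ with $\mathsf{is\_valid}(r_i,est_i,\mathit{proofs})$ and broadcast $(\langle\mathrm{AUX}[r_i](est_i)\rangle_i,\mathit{proofs})$.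 On receiving $(\langle\mathrm{AUX}[r_j](est_j)\rangle_j,\mathit{proofs})$: if $\mathsf{is\_valid}(r_j,est_j,\mathit{proofs})$, add the signed message and the messages of $\mathit{proofs}$ needed to satisfy the predicate to $\mathit{aux\_values}_i$ (such messages are called valid). Then let $\rho_i$ be the largest round for which $\mathit{aux\_values}_i$ contains messages from $t+1$ different processes, and set every timer with index $\le 2\rho_i$ to expired. *)

theory Defs
  imports Main
begin

text \<open>Signatures are unforgeable: in the execution model below, a signed message
  whose signer is non-faulty can only come into existence when that process
  signs it while following the algorithm.  Binary values are encoded as the
  naturals 0 and 1 (negation of b is 1 - b).\<close>

datatype sg = AUX (signer: nat) (srnd: nat) (sval: nat)

text \<open>A message on the network: (sender, destination, signed AUX message, proofs).\<close>
type_synonym msg = "nat \<times> nat \<times> sg \<times> sg set"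

definition signers :: "sg set \<Rightarrow> nat \<Rightarrow> nat \<Rightarrow> nat set" where
  "signers P r v = {j. AUX j r v \<in> P}"

definition is_valid :: "nat \<Rightarrow> nat \<Rightarrow> nat \<Rightarrow> nat \<Rightarrow> sg set \<Rightarrow> bool" where
  "is_valid n t r e P =
    (if r = 0 then True
     else if r = 1 then card (signers P 0 e) \<ge> t + 1
     else (let b = (r - 1) mod 2 in
       if e = b then (r = 2 \<and> card (signers P 0 b) \<ge> t + 1) \<or> card (signers P (r - 2) b) \<ge> n - t
       else card (signers P (r - 1) (1 - b)) \<ge> n - t))"

text \<open>The messages of a proof set needed to satisfy the predicate.\<close>
definition needed :: "nat \<Rightarrow> nat \<Rightarrow> sg set \<Rightarrow> sg set" where
  "needed r e P =
    (if r = 0 then {}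
     else if r = 1 then {s \<in> P. \<exists>j. s = AUX j 0 e}
     else (let b = (r - 1) mod 2 in
       if e = b then {s \<in> P. \<exists>j. s = AUX j (r - 2) b \<or> (r = 2 \<and> s = AUX j 0 b)}
       else {s \<in> P. \<exists>j. s = AUX j (r - 1) (1 - b)}))"

text \<open>Program counter:
  Init: before the initial broadcast of AUX[0](v_i);
  L1:   at the top of the loop (step (1));
  W3:   waiting for timer 2r to expire (step (3));
  W5:   waiting for round-r AUX messages from n-t processes (step (5));
  W6:   waiting for timer 2r+1 to expire (step (6)).\<close>
datatype phase = Init | L1 | W3 | W5 | W6

record lst =
  rnd :: nat
  aux :: "sg set"
  rcvd :: "(nat \<times> sg) set"   \<comment> \<open>(sender, signed message) of every well-formed message received\<close>
  started :: "nat set"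
  expired :: "nat set"
  est :: nat
  pc :: phase
  dec :: "nat option"

record gst =
  loc :: "nat \<Rightarrow> lst"
  log :: "msg list"      \<comment> \<open>every message ever sent, in order\<close>
  dlv :: "nat set"       \<comment> \<open>positions in the log already delivered\<close>

definition init_lst :: lst where
  "init_lst = \<lparr>rnd = 0, aux = {}, rcvd = {}, started = {}, expired = {}, est = 0,
               pc = Init, dec = None\<rparr>"

definition init_gst :: gst where
  "init_gst = \<lparr>loc = (\<lambda>_. init_lst), log = [], dlv = {}\<rparr>"

definition bmsgs :: "nat \<Rightarrow> nat \<Rightarrow> sg \<Rightarrow> sg set \<Rightarrow> msg list" where
  "bmsgs n i s P = map (\<lambda>j. (i, j, s, P)) [1..<n+1]"

definition coord :: "nat \<Rightarrow> nat \<Rightarrow> nat \<Rightarrow> bool" where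
  "coord n i r = (i = r mod n)"

definition start_timer :: "nat \<Rightarrow> lst \<Rightarrow> lst" where
  "start_timer k s = (if k \<in> expired s then s else s\<lparr>started := insert k (started s)\<rparr>)"

definition vals :: "nat \<Rightarrow> nat \<Rightarrow> lst \<Rightarrow> nat set" where
  "vals n t s = {v. v \<le> 1 \<and> (\<exists>S \<subseteq> aux s. is_valid n t (rnd s) v S)}"

definition est_ok :: "nat \<Rightarrow> nat \<Rightarrow> lst \<Rightarrow> nat \<Rightarrow> bool" where
  "est_ok n t s e =
    (let c = rnd s mod n; bv = (rnd s + 1) mod 2 in
     if \<exists>p. (c, AUX c (rnd s) p) \<in> rcvd s \<and> p \<in> vals n t s
     then (c, AUX c (rnd s) e) \<in> rcvd s \<and> e \<in> vals n t s
     else if bv \<in> vals n t s then e = bv else e = 1 - bv)"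

definition proofs_ok :: "nat \<Rightarrow> nat \<Rightarrow> lst \<Rightarrow> nat \<Rightarrow> sg set \<Rightarrow> bool" where
  "proofs_ok n t s e P =
    (P \<subseteq> aux s \<and> ((\<exists>S \<subseteq> aux s. is_valid n t (rnd s) e S) \<longrightarrow> is_valid n t (rnd s) e P))"

definition maybe_bcast :: "bool \<Rightarrow> nat \<Rightarrow> nat \<Rightarrow> nat \<Rightarrow> lst \<Rightarrow> msg list \<Rightarrow> lst \<Rightarrow> msg list \<Rightarrow> bool" where
  "maybe_bcast doit n t i s L s' L' =
    ((\<not> doit \<and> s' = s \<and> L' = L) \<or>
     (doit \<and> (\<exists>e P. est_ok n t s e \<and> proofs_ok n t s e P \<and> s' = s\<lparr>est := e\<rparr> \<and>
                    L' = L @ bmsgs n i (AUX i (rnd s) e) P)))"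

definition expire_upto :: "nat \<Rightarrow> lst \<Rightarrow> lst" where
  "expire_upto t s = s\<lparr>expired := expired s \<union>
      {k. \<exists>\<rho>. k \<le> 2 * \<rho> \<and> card {j. \<exists>v. AUX j \<rho> v \<in> aux s} \<ge> t + 1}\<rparr>"

definition receive :: "nat \<Rightarrow> nat \<Rightarrow> nat \<Rightarrow> sg \<Rightarrow> sg set \<Rightarrow> lst \<Rightarrow> lst" where
  "receive n t src m P s =
    (if sval m \<le> 1 \<and> signer m \<in> {1..n} \<and> finite P then
       (let s1 = s\<lparr>rcvd := insert (src, m) (rcvd s)\<rparr>;
            s2 = (if is_valid n t (srnd m) (sval m) P
                  then s1\<lparr>aux := aux s1 \<union> {m} \<union> needed (srnd m) (sval m) P\<rparr> else s1)
        in expire_upto t s2)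
     else s)"

text \<open>Signed messages known to the Byzantine coalition F: those contained in
  messages sent to a faulty process.\<close>
definition adv_known :: "nat set \<Rightarrow> gst \<Rightarrow> sg set" where
  "adv_known F g = (\<Union>(src, dst, m, P) \<in> set (log g). if dst \<in> F then insert m P else {})"

definition sigs_in :: "gst \<Rightarrow> sg set" where
  "sigs_in g = (\<Union>(src, dst, m, P) \<in> set (log g). insert m P)"

definition setloc :: "gst \<Rightarrow> nat \<Rightarrow> lst \<Rightarrow> gst" where
  "setloc g i s = g\<lparr>loc := (loc g)(i := s)\<rparr>"

inductive step :: "nat \<Rightarrow> nat \<Rightarrow> nat set \<Rightarrow> (nat \<Rightarrow> nat) \<Rightarrow> gst \<Rightarrow> gst \<Rightarrow> bool"
  for n :: nat and t :: nat and F :: "nat set" and vin :: "nat \<Rightarrow> nat" where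
  init: "\<lbrakk> i \<in> {1..n} - F; pc (loc g i) = Init \<rbrakk> \<Longrightarrow>
     step n t F vin g (g\<lparr>loc := (loc g)(i := (loc g i)\<lparr>pc := L1\<rparr>),
                          log := log g @ bmsgs n i (AUX i 0 (vin i)) {}\<rparr>)"
| loop: "\<lbrakk> i \<in> {1..n} - F; pc (loc g i) = L1;
           s1 = (loc g i)\<lparr>rnd := Suc (rnd (loc g i))\<rparr>;
           maybe_bcast (coord n i (rnd s1)) n t i s1 (log g) s2 L' \<rbrakk> \<Longrightarrow>
     step n t F vin g (g\<lparr>loc := (loc g)(i := (start_timer (2 * rnd s1) s2)\<lparr>pc := W3\<rparr>),
                          log := L'\<rparr>)"
| w3: "\<lbrakk> i \<in> {1..n} - F; pc (loc g i) = W3; 2 * rnd (loc g i) \<in> expired (loc g i);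
         maybe_bcast (\<not> coord n i (rnd (loc g i))) n t i (loc g i) (log g) s2 L' \<rbrakk> \<Longrightarrow>
     step n t F vin g (g\<lparr>loc := (loc g)(i := s2\<lparr>pc := W5\<rparr>), log := L'\<rparr>)"
| w5: "\<lbrakk> i \<in> {1..n} - F; pc (loc g i) = W5;
         card {j. \<exists>v. AUX j (rnd (loc g i)) v \<in> aux (loc g i)} \<ge> n - t \<rbrakk> \<Longrightarrow>
     step n t F vin g (setloc g i ((start_timer (2 * rnd (loc g i) + 1) (loc g i))\<lparr>pc := W6\<rparr>))"
| w6: "\<lbrakk> i \<in> {1..n} - F; pc (loc g i) = W6; s = loc g i;
         2 * rnd s + 1 \<in> expired s \<rbrakk> \<Longrightarrow>
     step n t F vin g (setloc g i (s\<lparr>dec := (if card (signers (aux s) (rnd s) (rnd s mod 2)) \<ge> n - t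
                                                \<and> dec s = None
                                              then Some (rnd s mod 2) else dec s),
                                       pc := L1\<rparr>))"
| timer: "\<lbrakk> i \<in> {1..n} - F; k \<in> started (loc g i) \<rbrakk> \<Longrightarrow>
     step n t F vin g (setloc g i ((loc g i)\<lparr>expired := insert k (expired (loc g i))\<rparr>))"
| deliver: "\<lbrakk> i \<in> {1..n} - F; k < length (log g); k \<notin> dlv g; log g ! k = (src, i, m, P) \<rbrakk> \<Longrightarrow>
     step n t F vin g ((setloc g i (receive n t src m P (loc g i)))\<lparr>dlv := insert k (dlv g)\<rparr>)"
| byz: "\<lbrakk> src \<in> F; dst \<in> {1..n}; finite P;
         \<forall>s \<in> insert m P. signer s \<in> {1..n} \<and> (signer s \<in> F \<or> s \<in> adv_known F g) \<rbrakk> \<Longrightarrow>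
     step n t F vin g (g\<lparr>log := log g @ [(src, dst, m, P)]\<rparr>)"

end

theory Submission
  imports Defs
begin

text \<open>A non-faulty process signs at most one AUX message per round: it broadcasts
  once per round (at step (2) if it is the coordinator, at step (4) otherwise) and
  only after its round counter has moved past every round it signed before; the
  adversary can only replay signatures of non-faulty processes it has seen.  Hence
  a process signing both AUX[r](0) and AUX[r](1) is faulty.  Two sets of at least
  n - t signers out of n share at least n - 2t > t processes, so they cannot
  both exist.\<close>

lemma quorums_intersect_outside:
  assumes "finite U" "A \<subseteq> U" "B \<subseteq> U" "3 * t < card U"
    and "card U - t \<le> card A" "card U - t \<le> card B"
    and "finite F" "card F \<le> t"
  shows "\<not> A \<inter> B \<subseteq> F"
proof
  assume "A \<inter> B \<subseteq> F"
  then have "card (A \<inter> B) \<le> t"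
    using assms(7,8) card_mono le_trans by blast
  moreover have "card (A \<union> B) \<le> card U"
    using assms(1-3) by (simp add: card_mono)
  moreover have "card A + card B = card (A \<union> B) + card (A \<inter> B)"
    using assms(1-3) by (meson card_Un_Int finite_subset)
  ultimately show False
    using assms(4-6) by linarith
qed

lemma card_Collect_binary_le_1:
  assumes "\<not> (Q 0 \<and> Q 1)"
  shows "card {b :: nat. b \<le> 1 \<and> Q b} \<le> 1"
proof -
  have "{b :: nat. b \<le> 1 \<and> Q b} \<subseteq> {if Q 0 then 0 else 1}"
    using assms le_Suc_eq by auto
  then show ?thesis
    using card_mono[of "{if Q 0 then 0 else 1 :: nat}"] by simp
qed

definition log_sigs :: "msg list \<Rightarrow> sg set" where
  "log_sigs L = (\<Union>(src, dst, m, P) \<in> set L. insert m P)"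

lemma sigs_in_eq_log_sigs: "sigs_in g = log_sigs (log g)"
  by (simp add: sigs_in_def log_sigs_def)

lemma log_sigs_append [simp]: "log_sigs (L @ M) = log_sigs L \<union> log_sigs M"
  by (auto simp: log_sigs_def)

lemma log_sigs_bmsgs: "log_sigs (bmsgs n i m P) \<subseteq> insert m P"
  by (auto simp: log_sigs_def bmsgs_def)

lemma maybe_bcast_cases:
  assumes "maybe_bcast doit n t i s L s' L'"
  obtains "\<not> doit" "s' = s" "L' = L"
  | e P where "doit" "P \<subseteq> aux s" "s' = s\<lparr>est := e\<rparr>"
      "L' = L @ bmsgs n i (AUX i (rnd s) e) P"
  using assms unfolding maybe_bcast_def proofs_ok_def by blast

lemma start_timer_simps [simp]:
  "rnd (start_timer k s) = rnd s" "pc (start_timer k s) = pc s" "aux (start_timer k s) = aux s"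
  by (auto simp: start_timer_def)

lemma receive_simps [simp]:
  "rnd (receive n t src m P s) = rnd s" "pc (receive n t src m P s) = pc s"
  by (auto simp: receive_def expire_upto_def Let_def)

lemma aux_receive_subset: "aux (receive n t src m P s) \<subseteq> aux s \<union> insert m P"
  by (auto simp: receive_def expire_upto_def Let_def needed_def)

text \<open>Rounds in which process i may already have signed: none before the initial
  broadcast, afterwards all rounds up to rnd s, except rnd s itself while a
  non-coordinator waits at step (3), i.e. before its step-(4) broadcast.\<close>
definition may_have_signed :: "nat \<Rightarrow> nat \<Rightarrow> lst \<Rightarrow> nat \<Rightarrow> bool" where
  "may_have_signed n i s r =
    (pc s \<noteq> Init \<and> (r < rnd s \<or> r = rnd s \<and> \<not> (pc s = W3 \<and> \<not> coord n i (rnd s))))"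

definition safety_inv :: "nat \<Rightarrow> nat set \<Rightarrow> gst \<Rightarrow> bool" where
  "safety_inv n F g =
    ((\<forall>s \<in> sigs_in g. signer s \<in> {1..n}) \<and>
     (\<forall>i. aux (loc g i) \<subseteq> sigs_in g) \<and>
     (\<forall>i \<in> {1..n} - F. \<forall>r v. AUX i r v \<in> sigs_in g \<longrightarrow> may_have_signed n i (loc g i) r) \<and>
     (\<forall>i \<in> {1..n} - F. \<forall>r v v'. AUX i r v \<in> sigs_in g \<longrightarrow> AUX i r v' \<in> sigs_in g \<longrightarrow> v = v'))"

lemma safety_inv_init_gst: "safety_inv n F init_gst"
  by (simp add: safety_inv_def init_gst_def init_lst_def sigs_in_def)

lemma safety_inv_local_step:
  assumes I: "safety_inv n F g"
    and log': "log g' = log g"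
    and others: "\<And>j. j \<noteq> i \<Longrightarrow> loc g' j = loc g j"
    and signed: "\<And>r. may_have_signed n i (loc g i) r \<Longrightarrow> may_have_signed n i (loc g' i) r"
    and aux': "aux (loc g' i) \<subseteq> sigs_in g"
  shows "safety_inv n F g'"
proof -
  have "sigs_in g' = sigs_in g"
    using log' by (simp add: sigs_in_eq_log_sigs)
  moreover have "may_have_signed n j (loc g j) r \<Longrightarrow> may_have_signed n j (loc g' j) r" for j r
    using signed others by (cases "j = i") auto
  moreover have "aux (loc g' j) \<subseteq> sigs_in g" for j
    using I aux' others unfolding safety_inv_def by (cases "j = i") auto
  ultimately show ?thesis
    using I unfolding safety_inv_def by metis
qed

lemma safety_inv_sign_step:
  assumes I: "safety_inv n F g" and i: "i \<in> {1..n} - F"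
    and log': "log g' = log g @ bmsgs n i (AUX i r e) P" and P: "P \<subseteq> aux (loc g i)"
    and fresh: "\<not> may_have_signed n i (loc g i) r"
    and signed: "\<And>r'. may_have_signed n i (loc g i) r' \<or> r' = r \<Longrightarrow>
                          may_have_signed n i (loc g' i) r'"
    and others: "\<And>j. j \<noteq> i \<Longrightarrow> loc g' j = loc g j"
    and aux': "aux (loc g' i) = aux (loc g i)"
  shows "safety_inv n F g'"
proof -
  have sigs_old: "sigs_in g \<subseteq> sigs_in g'"
    using log' by (auto simp: sigs_in_eq_log_sigs)
  have "sigs_in g' \<subseteq> sigs_in g \<union> insert (AUX i r e) P"
    using log' log_sigs_bmsgs[of n i "AUX i r e" P] by (auto simp: sigs_in_eq_log_sigs)
  then have sigs_new: "sigs_in g' \<subseteq> insert (AUX i r e) (sigs_in g)"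
    using I P unfolding safety_inv_def by blast
  have unsigned: "AUX i r v \<notin> sigs_in g" for v
    using I i fresh unfolding safety_inv_def by blast
  have "\<forall>s \<in> sigs_in g'. signer s \<in> {1..n}"
    using I i sigs_new unfolding safety_inv_def by auto
  moreover have "\<forall>j. aux (loc g' j) \<subseteq> sigs_in g'"
    using I aux' others sigs_old unfolding safety_inv_def by (metis order_trans)
  moreover have "may_have_signed n j (loc g' j) r'"
    if "j \<in> {1..n} - F" "AUX j r' v \<in> sigs_in g'" for j r' v
  proof (cases "AUX j r' v \<in> sigs_in g")
    case True
    then have "may_have_signed n j (loc g j) r'"
      using I that(1) unfolding safety_inv_def by blast
    then show ?thesis
      using signed others by (cases "j = i") auto
  next
    case False
    then show ?thesis
      using sigs_new that(2) signed by auto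
  qed
  moreover have "v = v'"
    if "j \<in> {1..n} - F" "AUX j r' v \<in> sigs_in g'" "AUX j r' v' \<in> sigs_in g'" for j r' v v'
  proof (cases "AUX j r' v \<in> sigs_in g \<and> AUX j r' v' \<in> sigs_in g")
    case True
    then show ?thesis
      using I that(1) unfolding safety_inv_def by blast
  next
    case False
    then show ?thesis
      using sigs_new that(2,3) unsigned by auto
  qed
  ultimately show ?thesis
    unfolding safety_inv_def by blast
qed

lemma safety_inv_faulty_step:
  assumes I: "safety_inv n F g"
    and loc': "loc g' = loc g"
    and sigs_old: "sigs_in g \<subseteq> sigs_in g'"
    and sigs_new: "\<And>s. s \<in> sigs_in g' \<Longrightarrow> s \<notin> sigs_in g \<Longrightarrow> signer s \<in> F \<inter> {1..n}"
  shows "safety_inv n F g'"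
proof -
  have "AUX j r v \<in> sigs_in g" if "j \<notin> F" "AUX j r v \<in> sigs_in g'" for j r v
    using that sigs_new by fastforce
  moreover have "signer s \<in> {1..n}" if "s \<in> sigs_in g'" for s
    using I that sigs_new unfolding safety_inv_def by blast
  ultimately show ?thesis
    using I loc' sigs_old unfolding safety_inv_def by (metis DiffD2 order_trans)
qed

lemma safety_inv_aux_subset: "safety_inv n F g \<Longrightarrow> aux (loc g i) \<subseteq> sigs_in g"
  unfolding safety_inv_def by blast

lemma safety_inv_step:
  assumes "step n t F vin g g'" and I: "safety_inv n F g"
  shows "safety_inv n F g'"
  using assms(1)
proof cases
  case (init i)
  then show ?thesis
    by (intro safety_inv_sign_step[where i=i and r=0 and e="vin i" and P="{}", OF I])
      (auto simp: may_have_signed_def)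
next
  case (loop i s1 s2 L')
  from loop(5) show ?thesis
  proof (cases rule: maybe_bcast_cases)
    case 1
    with loop show ?thesis
      by (intro safety_inv_local_step[where i=i, OF I])
        (auto simp: may_have_signed_def safety_inv_aux_subset[OF I])
  next
    case (2 e P)
    with loop show ?thesis
      by (intro safety_inv_sign_step[where i=i and r="rnd s1" and e=e and P=P, OF I])
        (auto simp: may_have_signed_def)
  qed
next
  case (w3 i s2 L')
  from w3(5) show ?thesis
  proof (cases rule: maybe_bcast_cases)
    case 1
    with w3 show ?thesis
      by (intro safety_inv_local_step[where i=i, OF I])
        (auto simp: may_have_signed_def safety_inv_aux_subset[OF I])
  next
    case (2 e P)
    with w3 show ?thesis
      by (intro safety_inv_sign_step[where i=i and r="rnd (loc g i)" and e=e and P=P, OF I])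
        (auto simp: may_have_signed_def)
  qed
next
  case (w5 i)
  then show ?thesis
    by (intro safety_inv_local_step[where i=i, OF I])
      (auto simp: setloc_def may_have_signed_def safety_inv_aux_subset[OF I])
next
  case (w6 i s)
  then show ?thesis
    by (intro safety_inv_local_step[where i=i, OF I])
      (auto simp: setloc_def may_have_signed_def safety_inv_aux_subset[OF I])
next
  case (timer i k)
  then show ?thesis
    by (intro safety_inv_local_step[where i=i, OF I])
      (auto simp: setloc_def may_have_signed_def safety_inv_aux_subset[OF I])
next
  case (deliver i k src m P)
  then have "(src, i, m, P) \<in> set (log g)"
    by (metis nth_mem)
  then have "insert m P \<subseteq> sigs_in g"
    unfolding sigs_in_def by blast
  then have "aux (receive n t src m P (loc g i)) \<subseteq> sigs_in g"
    using aux_receive_subset[of n t src m P "loc g i"] safety_inv_aux_subset[OF I] by blast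
  moreover have "loc g' = (loc g)(i := receive n t src m P (loc g i))" "log g' = log g"
    using deliver by (simp_all add: setloc_def)
  ultimately show ?thesis
    by (intro safety_inv_local_step[where i=i, OF I]) (simp_all add: may_have_signed_def)
next
  case (byz src dst P m)
  have "adv_known F g \<subseteq> sigs_in g"
    unfolding adv_known_def sigs_in_def by (auto split: if_splits)
  moreover have "sigs_in g' = insert m P \<union> sigs_in g"
    using byz by (auto simp: sigs_in_eq_log_sigs log_sigs_def)
  ultimately show ?thesis
    using byz by (intro safety_inv_faulty_step[OF I]) auto
qed

lemma safety_inv_reachable:
  "(step n t F vin)\<^sup>*\<^sup>* init_gst g \<Longrightarrow> safety_inv n F g"
  by (induction rule: rtranclp_induct) (auto intro: safety_inv_init_gst safety_inv_step)

lemma safety_inv_signers_subset: "safety_inv n F g \<Longrightarrow> signers (sigs_in g) r v \<subseteq> {1..n}"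
  unfolding safety_inv_def signers_def by force

lemma safety_inv_equivocators_faulty:
  assumes "safety_inv n F g" and "v \<noteq> v'"
  shows "signers (sigs_in g) r v \<inter> signers (sigs_in g) r v' \<subseteq> F"
  using assms safety_inv_signers_subset[OF assms(1)]
  unfolding safety_inv_def signers_def by fastforce

theorem lemma1:
  fixes n t :: nat and F :: "nat set" and vin :: "nat \<Rightarrow> nat" and g :: gst
  assumes "3 * t < n"
    and "F \<subseteq> {1..n}" and "card F \<le> t"
    and "\<forall>i \<in> {1..n} - F. vin i \<le> 1"
    and "(step n t F vin)\<^sup>*\<^sup>* init_gst g"
  shows "\<forall>r. card {b. b \<le> 1 \<and> card (signers (sigs_in g) r b) \<ge> n - t} \<le> 1"
proof
  fix r
  have I: "safety_inv n F g"
    using assms(5) by (rule safety_inv_reachable)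
  have "\<not> (n - t \<le> card (signers (sigs_in g) r 0) \<and> n - t \<le> card (signers (sigs_in g) r 1))"
  proof
    assume "n - t \<le> card (signers (sigs_in g) r 0) \<and> n - t \<le> card (signers (sigs_in g) r 1)"
    then have "\<not> signers (sigs_in g) r 0 \<inter> signers (sigs_in g) r 1 \<subseteq> F"
      using assms(1-3) finite_subset[OF assms(2)] safety_inv_signers_subset[OF I]
      by (intro quorums_intersect_outside[of "{1..n}"]) simp_all
    then show False
      using safety_inv_equivocators_faulty[OF I, of 0 1] by simp
  qed
  then show "card {b. b \<le> 1 \<and> card (signers (sigs_in g) r b) \<ge> n - t} \<le> 1"
    by (rule card_Collect_binary_le_1)
qed

end
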